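(* Let $n\ge k\ge d$ be positive integers and let $G\subseteq\mathbb{Z}[\mathbf{x}_n,\mathbf{y}_d]$ be the set consisting of $h_r(\mathbf{y}_d)$ for all $r>k-d$; $e_r(\mathbf{x}_n) - e_{r-1}(\mathbf{x}_n)h_1(\mathbf{y}_d)+\cdots+(-1)^r h_r(\mathbf{y}_d)$ for all $r>n-d$; and $x_i^d - x_i^{d-1}e_1(\mathbf{y}_d)+\cdots+(-1)^d e_d(\mathbf{y}_d)$ for $i=1,\dots,n$. Let $J_{n,k,d}\subseteq\mathbb{Z}[\mathbf{x}_n,\mathbf{y}_d]$ be the ideal generated by $G$. If $f\in J_{n,k,d}\cap\mathbb{Z}[\mathbf{x}_n,\mathbf{y}_d]^{\mathfrak{S}_d}$, then $d!\cdot f$ lies in the ideal of $\mathbb{Z}[\mathbf{x}_n,\mathbf{y}_d]^{\mathfrak{S}_d}$ generated by $G$.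
   Context: $\mathbf{x}_n=(x_1,\dots,x_n)$, $\mathbf{y}_d=(y_1,\dots,y_d)$; $\mathfrak{S}_d$ acts by permuting the $y$-variables. $e_r,h_r$ are elementary and complete homogeneous symmetric polynomials ($e_0=h_0=1$, $e_r=0$ when $r$ exceeds the number of variables). *)

theory Defs
  imports "HOL-Library.Poly_Mapping" "HOL-Combinatorics.Permutations"
begin

text \<open>Polynomials in Z[x_0..x_(n-1), y_0..y_(d-1)]: variables are Inl i (x-variables)
  and Inr j (y-variables); monomials are finitely supported exponent maps.\<close>
type_synonym var = "nat + nat"
type_synonym mpoly = "(var \<Rightarrow>\<^sub>0 nat) \<Rightarrow>\<^sub>0 int"

definition Var :: "var \<Rightarrow> mpoly" where
  "Var v = Poly_Mapping.single (Poly_Mapping.single v 1) 1"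

definition psubst :: "(var \<Rightarrow> mpoly) \<Rightarrow> mpoly \<Rightarrow> mpoly" where
  "psubst f p = (\<Sum>mon\<in>Poly_Mapping.keys p. of_int (Poly_Mapping.lookup p mon) * (\<Prod>x\<in>Poly_Mapping.keys mon. f x ^ Poly_Mapping.lookup mon x))"

definition esym :: "nat \<Rightarrow> var set \<Rightarrow> mpoly" where
  "esym r S = (\<Sum>T\<in>{T. T \<subseteq> S \<and> card T = r}. \<Prod>v\<in>T. Var v)"

definition hsym :: "nat \<Rightarrow> var set \<Rightarrow> mpoly" where
  "hsym r S = (\<Sum>m\<in>{m :: var \<Rightarrow>\<^sub>0 nat. Poly_Mapping.keys m \<subseteq> S \<and> (\<Sum>v\<in>Poly_Mapping.keys m. Poly_Mapping.lookup m v) = r}.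
                  Poly_Mapping.single m 1)"

definition xvars :: "nat \<Rightarrow> var set" where "xvars n = Inl ` {..<n}"
definition yvars :: "nat \<Rightarrow> var set" where "yvars d = Inr ` {..<d}"

definition in_ring :: "nat \<Rightarrow> nat \<Rightarrow> mpoly \<Rightarrow> bool" where
  "in_ring n d p \<longleftrightarrow> (\<forall>m\<in>Poly_Mapping.keys p. Poly_Mapping.keys m \<subseteq> xvars n \<union> yvars d)"

definition act :: "(nat \<Rightarrow> nat) \<Rightarrow> mpoly \<Rightarrow> mpoly" where
  "act \<sigma> p = psubst (\<lambda>v. case v of Inl i \<Rightarrow> Var (Inl i) | Inr j \<Rightarrow> Var (Inr (\<sigma> j))) p"

definition y_symmetric :: "nat \<Rightarrow> mpoly \<Rightarrow> bool" where
  "y_symmetric d p \<longleftrightarrow> (\<forall>\<sigma>. \<sigma> permutes {..<d} \<longrightarrow> act \<sigma> p = p)"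

definition Gset :: "nat \<Rightarrow> nat \<Rightarrow> nat \<Rightarrow> mpoly set" where
  "Gset n k d =
     {hsym r (yvars d) | r. r > k - d}
   \<union> {(\<Sum>i\<le>r. (-1)^i * esym (r - i) (xvars n) * hsym i (yvars d)) | r. r > n - d}
   \<union> {(\<Sum>j\<le>d. (-1)^j * Var (Inl i) ^ (d - j) * esym j (yvars d)) | i. i < n}"

text \<open>f lies in the ideal generated by G inside the subring {p. P p}
  (coefficients restricted to satisfy P).\<close>
definition in_ideal_gen :: "(mpoly \<Rightarrow> bool) \<Rightarrow> mpoly set \<Rightarrow> mpoly \<Rightarrow> bool" where
  "in_ideal_gen P G f \<longleftrightarrow>
     (\<exists>S c. finite S \<and> S \<subseteq> G \<and> (\<forall>g\<in>S. P (c g)) \<and> f = (\<Sum>g\<in>S. c g * g))"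

end

theory Submission
  imports Defs
begin

text \<open>Every generator in G is invariant under permutations of the y-variables. Writing
  f as a combination of generators with coefficients c(g) and applying the symmetrization
  p \<mapsto> \<Sum>\<sigma>\<in>S(d). \<sigma> p to both sides gives d! f on the left, since f is symmetric, and the
  combination with the symmetric coefficients \<Sum>\<sigma>\<in>S(d). \<sigma> c(g) on the right.\<close>

section \<open>Substitution is a ring homomorphism\<close>

definition eval_monomial :: "(var \<Rightarrow> mpoly) \<Rightarrow> (var \<Rightarrow>\<^sub>0 nat) \<Rightarrow> mpoly" where
  "eval_monomial f m = (\<Prod>x\<in>Poly_Mapping.keys m. f x ^ Poly_Mapping.lookup m x)"

lemma eval_monomial_superset:
  assumes "finite K" "Poly_Mapping.keys m \<subseteq> K"
  shows "eval_monomial f m = (\<Prod>x\<in>K. f x ^ Poly_Mapping.lookup m x)"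
  unfolding eval_monomial_def
  by (rule prod.mono_neutral_left) (use assms in \<open>auto simp: in_keys_iff\<close>)

lemma eval_monomial_0 [simp]: "eval_monomial f 0 = 1"
  by (simp add: eval_monomial_def)

lemma eval_monomial_add: "eval_monomial f (a + b) = eval_monomial f a * eval_monomial f b"
proof -
  let ?K = "Poly_Mapping.keys a \<union> Poly_Mapping.keys b"
  have "eval_monomial f (a + b) = (\<Prod>x\<in>?K. f x ^ Poly_Mapping.lookup (a + b) x)"
    by (rule eval_monomial_superset) (auto dest: keys_add[THEN subsetD])
  also have "\<dots> = (\<Prod>x\<in>?K. f x ^ Poly_Mapping.lookup a x) * (\<Prod>x\<in>?K. f x ^ Poly_Mapping.lookup b x)"
    by (simp add: lookup_add power_add prod.distrib)
  also have "\<dots> = eval_monomial f a * eval_monomial f b"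
    by (simp add: eval_monomial_superset[of ?K a f] eval_monomial_superset[of ?K b f])
  finally show ?thesis .
qed

lemma psubst_eq_sum_monomials:
  "psubst f p = (\<Sum>m\<in>Poly_Mapping.keys p. of_int (Poly_Mapping.lookup p m) * eval_monomial f m)"
  by (simp add: psubst_def eval_monomial_def)

lemma psubst_superset:
  assumes "finite K" "Poly_Mapping.keys p \<subseteq> K"
  shows "psubst f p = (\<Sum>m\<in>K. of_int (Poly_Mapping.lookup p m) * eval_monomial f m)"
  unfolding psubst_eq_sum_monomials
  by (rule sum.mono_neutral_left) (use assms in \<open>auto simp: in_keys_iff\<close>)

lemma psubst_single: "psubst f (Poly_Mapping.single m c) = of_int c * eval_monomial f m"
  by (simp add: psubst_eq_sum_monomials)

lemma psubst_Var [simp]: "psubst f (Var v) = f v"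
  by (simp add: Var_def psubst_single eval_monomial_def)

lemma psubst_0 [simp]: "psubst f 0 = 0"
  by (simp add: psubst_def)

lemma psubst_1 [simp]: "psubst f 1 = 1"
  using psubst_single[of f 0 1] by simp

lemma psubst_add: "psubst f (p + q) = psubst f p + psubst f q"
proof -
  let ?K = "Poly_Mapping.keys p \<union> Poly_Mapping.keys q"
  have "psubst f (p + q) = (\<Sum>m\<in>?K. of_int (Poly_Mapping.lookup (p + q) m) * eval_monomial f m)"
    by (rule psubst_superset) (auto dest: keys_add[THEN subsetD])
  also have "\<dots> = (\<Sum>m\<in>?K. of_int (Poly_Mapping.lookup p m) * eval_monomial f m)
                 + (\<Sum>m\<in>?K. of_int (Poly_Mapping.lookup q m) * eval_monomial f m)"
    by (simp add: lookup_add distrib_right sum.distrib)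
  also have "\<dots> = psubst f p + psubst f q"
    by (simp add: psubst_superset[of ?K p f] psubst_superset[of ?K q f])
  finally show ?thesis .
qed

lemma of_int_eq_single: "(of_int c :: mpoly) = Poly_Mapping.single 0 c"
  by (rule sym) (use single_of_int[where k = c and 'b = int] in simp)

lemma psubst_of_int [simp]: "psubst f (of_int c) = of_int c"
  by (simp add: of_int_eq_single psubst_single)

lemma psubst_uminus: "psubst f (- p) = - psubst f p"
  using psubst_add[of f p "- p"] by (simp add: eq_neg_iff_add_eq_0 add.commute)

lemma psubst_sum: "psubst f (sum g A) = (\<Sum>a\<in>A. psubst f (g a))"
  by (induction A rule: infinite_finite_induct) (auto simp: psubst_add)

lemma sum_single_lookup: "(\<Sum>a\<in>Poly_Mapping.keys p. Poly_Mapping.single a (Poly_Mapping.lookup p a)) = p"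
  by (rule poly_mapping_eqI) (simp add: lookup_sum lookup_single when_def in_keys_iff)

lemma psubst_mult: "psubst f (p * q) = psubst f p * psubst f q"
proof -
  let ?P = "Poly_Mapping.keys p" and ?Q = "Poly_Mapping.keys q"
  have "p * q = (\<Sum>a\<in>?P. Poly_Mapping.single a (Poly_Mapping.lookup p a))
              * (\<Sum>b\<in>?Q. Poly_Mapping.single b (Poly_Mapping.lookup q b))"
    by (simp only: sum_single_lookup)
  also have "\<dots> = (\<Sum>a\<in>?P. \<Sum>b\<in>?Q.
      Poly_Mapping.single (a + b) (Poly_Mapping.lookup p a * Poly_Mapping.lookup q b))"
    by (simp add: sum_distrib_left sum_distrib_right mult_single) (rule sum.swap)
  finally have "psubst f (p * q) = (\<Sum>a\<in>?P. \<Sum>b\<in>?Q.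
      of_int (Poly_Mapping.lookup p a) * eval_monomial f a
      * (of_int (Poly_Mapping.lookup q b) * eval_monomial f b))"
    by (simp add: psubst_sum psubst_single eval_monomial_add mult_ac)
  also have "\<dots> = psubst f p * psubst f q"
    by (simp add: psubst_eq_sum_monomials sum_distrib_left sum_distrib_right) (rule sum.swap)
  finally show ?thesis .
qed

lemma psubst_power: "psubst f (p ^ n) = psubst f p ^ n"
  by (induction n) (simp_all add: psubst_mult)

lemma psubst_prod: "psubst f (prod g A) = (\<Prod>a\<in>A. psubst f (g a))"
  by (induction A rule: infinite_finite_induct) (auto simp: psubst_mult)

lemma psubst_psubst: "psubst g (psubst f p) = psubst (\<lambda>v. psubst g (f v)) p"
  by (simp add: psubst_eq_sum_monomials[of f] psubst_eq_sum_monomials[of "\<lambda>v. psubst g (f v)"]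
      psubst_sum psubst_mult psubst_prod psubst_power eval_monomial_def)

lemma Var_power: "Var x ^ e = Poly_Mapping.single (Poly_Mapping.single x e) 1"
  by (induction e) (simp_all add: Var_def mult_single single_add[symmetric] add.commute)

lemma prod_single_one:
  "(\<Prod>x\<in>A. Poly_Mapping.single (g x) (1::int)) = Poly_Mapping.single (\<Sum>x\<in>A. g x) 1"
  by (induction A rule: infinite_finite_induct) (simp_all add: mult_single)

text \<open>For a bijection \<rho>, the monomial \<^term>\<open>Poly_Mapping.map_key (inv \<rho>) m\<close> is m with every
  variable v renamed to \<rho> v.\<close>

lemma psubst_rename_monomial:
  assumes "bij \<rho>"
  shows "psubst (\<lambda>v. Var (\<rho> v)) (Poly_Mapping.single m 1)
           = Poly_Mapping.single (Poly_Mapping.map_key (inv \<rho>) m) 1"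
proof -
  have "(\<Sum>x\<in>Poly_Mapping.keys m. Poly_Mapping.single (\<rho> x) (Poly_Mapping.lookup m x))
          = Poly_Mapping.map_key (inv \<rho>) m"
  proof (rule poly_mapping_eqI, goal_cases)
    case (1 y)
    have "\<rho> x = y \<longleftrightarrow> x = inv \<rho> y" for x
      using assms by (auto simp: bij_inv_eq_iff)
    with assms show ?case
      by (simp add: lookup_sum lookup_single when_def map_key.rep_eq bij_imp_bij_inv bij_is_inj
          in_keys_iff)
  qed
  then show ?thesis
    by (simp add: psubst_single eval_monomial_def Var_power prod_single_one)
qed

lemma map_key_inv_cancel:
  assumes "bij \<rho>"
  shows "Poly_Mapping.map_key \<rho> (Poly_Mapping.map_key (inv \<rho>) m) = m"
    and "Poly_Mapping.map_key (inv \<rho>) (Poly_Mapping.map_key \<rho> m) = m"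
proof -
  have inj: "inj \<rho>" "inj (inv \<rho>)"
    using assms by (simp_all add: bij_is_inj bij_imp_bij_inv)
  have "inv \<rho> \<circ> \<rho> = id" "\<rho> \<circ> inv \<rho> = id"
    using assms by (auto simp: fun_eq_iff bij_is_inj bij_is_surj surj_f_inv_f)
  then show "Poly_Mapping.map_key \<rho> (Poly_Mapping.map_key (inv \<rho>) m) = m"
    and "Poly_Mapping.map_key (inv \<rho>) (Poly_Mapping.map_key \<rho> m) = m"
    by (simp_all add: map_key_compose inj map_key_id[folded id_def])
qed

lemma keys_map_key_inv:
  "bij \<rho> \<Longrightarrow> Poly_Mapping.keys (Poly_Mapping.map_key (inv \<rho>) m) = \<rho> ` Poly_Mapping.keys m"
  by (simp add: keys_map_key bij_is_inj bij_imp_bij_inv bij_vimage_eq_inv_image inv_inv_eq)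

lemma keys_map_key_subset:
  assumes "inj \<rho>" and "Poly_Mapping.keys m \<subseteq> \<rho> ` S"
  shows "Poly_Mapping.keys (Poly_Mapping.map_key \<rho> m) \<subseteq> S"
proof -
  have "Poly_Mapping.keys (Poly_Mapping.map_key \<rho> m) = \<rho> -` Poly_Mapping.keys m"
    using assms(1) by (rule keys_map_key)
  also have "\<dots> \<subseteq> \<rho> -` \<rho> ` S"
    using assms(2) by blast
  also have "\<dots> = S"
    using assms(1) by (rule inj_vimage_image_eq)
  finally show ?thesis .
qed

lemma degree_map_key_inv:
  assumes "bij \<rho>"
  shows "(\<Sum>v\<in>Poly_Mapping.keys (Poly_Mapping.map_key (inv \<rho>) m).
            Poly_Mapping.lookup (Poly_Mapping.map_key (inv \<rho>) m) v)
         = (\<Sum>v\<in>Poly_Mapping.keys m. Poly_Mapping.lookup m v)"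
  using assms
  by (simp add: keys_map_key_inv map_key.rep_eq bij_imp_bij_inv bij_is_inj)
     (subst sum.reindex, simp_all add: inj_on_subset[OF bij_is_inj] bij_is_inj inv_f_f)

lemma psubst_rename_hsym:
  assumes "bij \<rho>"
  shows "psubst (\<lambda>v. Var (\<rho> v)) (hsym r S) = hsym r (\<rho> ` S)"
proof -
  let ?M = "\<lambda>S. {m :: var \<Rightarrow>\<^sub>0 nat. Poly_Mapping.keys m \<subseteq> S
                    \<and> (\<Sum>v\<in>Poly_Mapping.keys m. Poly_Mapping.lookup m v) = r}"
  have "psubst (\<lambda>v. Var (\<rho> v)) (hsym r S)
          = (\<Sum>m\<in>?M S. Poly_Mapping.single (Poly_Mapping.map_key (inv \<rho>) m) 1)"
    by (simp add: hsym_def psubst_sum psubst_rename_monomial assms)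
  also have "\<dots> = (\<Sum>m\<in>?M (\<rho> ` S). Poly_Mapping.single m 1)"
  proof (rule sum.reindex_bij_witness[where j = "Poly_Mapping.map_key (inv \<rho>)"
                                         and i = "Poly_Mapping.map_key \<rho>"])
    fix m assume m: "m \<in> ?M S"
    show "Poly_Mapping.map_key \<rho> (Poly_Mapping.map_key (inv \<rho>) m) = m"
      using assms by (rule map_key_inv_cancel)
    show "Poly_Mapping.map_key (inv \<rho>) m \<in> ?M (\<rho> ` S)"
      using m degree_map_key_inv[OF assms, of m] by (auto simp: keys_map_key_inv assms)
  next
    fix m assume m: "m \<in> ?M (\<rho> ` S)"
    show "Poly_Mapping.map_key (inv \<rho>) (Poly_Mapping.map_key \<rho> m) = m"
      using assms by (rule map_key_inv_cancel)
    have "Poly_Mapping.keys (Poly_Mapping.map_key \<rho> m) \<subseteq> S"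
      using m by (simp add: keys_map_key_subset bij_is_inj assms)
    moreover have "(\<Sum>v\<in>Poly_Mapping.keys (Poly_Mapping.map_key \<rho> m).
                      Poly_Mapping.lookup (Poly_Mapping.map_key \<rho> m) v) = r"
      using m degree_map_key_inv[OF assms, of "Poly_Mapping.map_key \<rho> m"]
      by (simp add: map_key_inv_cancel[OF assms])
    ultimately show "Poly_Mapping.map_key \<rho> m \<in> ?M S"
      by simp
  qed simp
  also have "\<dots> = hsym r (\<rho> ` S)"
    by (simp add: hsym_def)
  finally show ?thesis .
qed

lemma psubst_rename_esym:
  assumes "inj \<rho>"
  shows "psubst (\<lambda>v. Var (\<rho> v)) (esym r S) = esym r (\<rho> ` S)"
proof -
  have inj_on: "inj_on \<rho> T" for T
    using assms by (rule inj_on_subset) simp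
  have "psubst (\<lambda>v. Var (\<rho> v)) (esym r S) = (\<Sum>T\<in>{T. T \<subseteq> S \<and> card T = r}. \<Prod>v\<in>T. Var (\<rho> v))"
    by (simp add: esym_def psubst_sum psubst_prod)
  also have "\<dots> = (\<Sum>T\<in>{T. T \<subseteq> S \<and> card T = r}. \<Prod>w\<in>\<rho> ` T. Var w)"
    by (simp add: prod.reindex inj_on)
  also have "\<dots> = esym r (\<rho> ` S)"
    unfolding esym_def
  proof (rule sum.reindex_bij_witness[where j = "image \<rho>" and i = "\<lambda>T. \<rho> -` T \<inter> S"])
    fix T assume "T \<in> {T. T \<subseteq> S \<and> card T = r}"
    then show "\<rho> -` \<rho> ` T \<inter> S = T" and "\<rho> ` T \<in> {T. T \<subseteq> \<rho> ` S \<and> card T = r}"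
      using assms by (auto simp: card_image inj_on inj_eq)
  next
    fix T assume T: "T \<in> {T. T \<subseteq> \<rho> ` S \<and> card T = r}"
    then show image_eq: "\<rho> ` (\<rho> -` T \<inter> S) = T"
      by blast
    have "card (\<rho> -` T \<inter> S) = card T"
      using card_image[OF inj_on, of "\<rho> -` T \<inter> S"] image_eq by simp
    then show "\<rho> -` T \<inter> S \<in> {T. T \<subseteq> S \<and> card T = r}"
      using T by simp
  qed simp
  finally show ?thesis .
qed

definition in_var_ring :: "var set \<Rightarrow> mpoly \<Rightarrow> bool" where
  "in_var_ring V p \<longleftrightarrow> (\<forall>m\<in>Poly_Mapping.keys p. Poly_Mapping.keys m \<subseteq> V)"

lemma in_ring_eq_in_var_ring: "in_ring n d = in_var_ring (xvars n \<union> yvars d)"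
  by (simp add: fun_eq_iff in_ring_def in_var_ring_def)

lemma in_var_ring_add: "in_var_ring V p \<Longrightarrow> in_var_ring V q \<Longrightarrow> in_var_ring V (p + q)"
  unfolding in_var_ring_def using keys_add[of p q] by blast

lemma in_var_ring_mult: "in_var_ring V p \<Longrightarrow> in_var_ring V q \<Longrightarrow> in_var_ring V (p * q)"
proof (unfold in_var_ring_def, intro ballI)
  fix m assume p: "\<forall>m\<in>Poly_Mapping.keys p. Poly_Mapping.keys m \<subseteq> V"
    and q: "\<forall>m\<in>Poly_Mapping.keys q. Poly_Mapping.keys m \<subseteq> V"
    and "m \<in> Poly_Mapping.keys (p * q)"
  then obtain a b where "m = a + b" "a \<in> Poly_Mapping.keys p" "b \<in> Poly_Mapping.keys q"
    using keys_mult[of p q] by blast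
  with p q show "Poly_Mapping.keys m \<subseteq> V"
    using keys_add[of a b] by blast
qed

lemma in_var_ring_of_int: "in_var_ring V (of_int c)"
  by (simp add: in_var_ring_def of_int_eq_single)

lemma in_var_ring_Var: "v \<in> V \<Longrightarrow> in_var_ring V (Var v)"
  by (simp add: in_var_ring_def Var_def)

lemma in_var_ring_sum: "(\<And>a. a \<in> A \<Longrightarrow> in_var_ring V (g a)) \<Longrightarrow> in_var_ring V (sum g A)"
  using in_var_ring_of_int[of V 0]
  by (induction A rule: infinite_finite_induct) (auto intro: in_var_ring_add)

lemma in_var_ring_prod: "(\<And>a. a \<in> A \<Longrightarrow> in_var_ring V (g a)) \<Longrightarrow> in_var_ring V (prod g A)"
  using in_var_ring_of_int[of V 1]
  by (induction A rule: infinite_finite_induct) (auto intro: in_var_ring_mult)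

lemma in_var_ring_power: "in_var_ring V p \<Longrightarrow> in_var_ring V (p ^ k)"
  using in_var_ring_of_int[of V 1]
  by (induction k) (auto intro: in_var_ring_mult)

lemma in_var_ring_psubst:
  assumes "in_var_ring V p" and "\<And>v. v \<in> V \<Longrightarrow> in_var_ring W (f v)"
  shows "in_var_ring W (psubst f p)"
  unfolding psubst_eq_sum_monomials eval_monomial_def
proof (intro in_var_ring_sum in_var_ring_mult in_var_ring_of_int in_var_ring_prod in_var_ring_power)
  fix m x assume "m \<in> Poly_Mapping.keys p" "x \<in> Poly_Mapping.keys m"
  with assms show "in_var_ring W (f x)"
    unfolding in_var_ring_def by blast
qed

section \<open>The action of the symmetric group on the y-variables\<close>

lemma act_eq_psubst: "act \<sigma> = psubst (\<lambda>v. Var (map_sum id \<sigma> v))"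
proof -
  have "(\<lambda>v. case v of Inl i \<Rightarrow> Var (Inl i) | Inr j \<Rightarrow> Var (Inr (\<sigma> j))) = (\<lambda>v. Var (map_sum id \<sigma> v))"
    by (auto simp: fun_eq_iff split: sum.split)
  then show ?thesis
    by (simp add: fun_eq_iff act_def)
qed

lemma act_act: "act \<tau> (act \<sigma> p) = act (\<tau> \<circ> \<sigma>) p"
  by (simp add: act_eq_psubst psubst_psubst map_sum.compositionality comp_def id_def)

lemma act_sum: "act \<sigma> (sum g A) = (\<Sum>a\<in>A. act \<sigma> (g a))"
  by (simp add: act_eq_psubst psubst_sum)

lemma act_mult: "act \<sigma> (p * q) = act \<sigma> p * act \<sigma> q"
  by (simp add: act_eq_psubst psubst_mult)

lemma bij_map_sum_id: "bij \<sigma> \<Longrightarrow> bij (map_sum id \<sigma>)"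
proof (rule o_bij)
  assume "bij \<sigma>"
  then have "inv \<sigma> \<circ> \<sigma> = id" and "\<sigma> \<circ> inv \<sigma> = id"
    by (simp_all add: bij_is_inj surj_iff[THEN iffD1, OF bij_is_surj])
  then show "map_sum id (inv \<sigma>) \<circ> map_sum id \<sigma> = id"
    and "map_sum id \<sigma> \<circ> map_sum id (inv \<sigma>) = id"
    by (simp_all add: map_sum.comp map_sum.id)
qed

lemma image_map_sum_id_xvars: "map_sum id \<sigma> ` xvars n = xvars n"
  by (simp add: xvars_def image_image)

lemma image_map_sum_id_yvars: "\<sigma> permutes {..<d} \<Longrightarrow> map_sum id \<sigma> ` yvars d = yvars d"
proof -
  assume "\<sigma> permutes {..<d}"
  moreover have "map_sum id \<sigma> ` yvars d = Inr ` \<sigma> ` {..<d}"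
    by (simp add: yvars_def image_image)
  ultimately show ?thesis
    by (simp add: yvars_def permutes_image)
qed

lemma act_Gset:
  assumes \<sigma>: "\<sigma> permutes {..<d}" and g: "g \<in> Gset n k d"
  shows "act \<sigma> g = g"
proof -
  let ?\<rho> = "map_sum id \<sigma>"
  have bij: "bij ?\<rho>"
    using \<sigma> by (intro bij_map_sum_id permutes_bij)
  have hsym_y: "psubst (\<lambda>v. Var (?\<rho> v)) (hsym r (yvars d)) = hsym r (yvars d)" for r
    using psubst_rename_hsym[OF bij] by (simp add: image_map_sum_id_yvars[OF \<sigma>])
  have esym_y: "psubst (\<lambda>v. Var (?\<rho> v)) (esym r (yvars d)) = esym r (yvars d)" for r
    using psubst_rename_esym[OF bij_is_inj[OF bij]] by (simp add: image_map_sum_id_yvars[OF \<sigma>])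
  have esym_x: "psubst (\<lambda>v. Var (?\<rho> v)) (esym r (xvars n)) = esym r (xvars n)" for r
    using psubst_rename_esym[OF bij_is_inj[OF bij]] by (simp add: image_map_sum_id_xvars)
  from g consider (h) r where "g = hsym r (yvars d)"
    | (eh) r where "g = (\<Sum>i\<le>r. (-1) ^ i * esym (r - i) (xvars n) * hsym i (yvars d))"
    | (ey) i where "g = (\<Sum>j\<le>d. (-1) ^ j * Var (Inl i) ^ (d - j) * esym j (yvars d))"
    unfolding Gset_def by blast
  then show ?thesis
    by cases (simp_all add: act_eq_psubst psubst_sum psubst_mult psubst_power psubst_uminus
        hsym_y esym_y esym_x)
qed

lemma in_ring_act:
  assumes \<sigma>: "\<sigma> permutes {..<d}" and p: "in_ring n d p"
  shows "in_ring n d (act \<sigma> p)"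
proof -
  have closed: "map_sum id \<sigma> ` (xvars n \<union> yvars d) = xvars n \<union> yvars d"
    by (simp add: image_Un image_map_sum_id_xvars image_map_sum_id_yvars[OF \<sigma>])
  show ?thesis
    using p unfolding in_ring_eq_in_var_ring act_eq_psubst
  proof (rule in_var_ring_psubst)
    fix v assume "v \<in> xvars n \<union> yvars d"
    then have "map_sum id \<sigma> v \<in> xvars n \<union> yvars d"
      using closed by blast
    then show "in_var_ring (xvars n \<union> yvars d) (Var (map_sum id \<sigma> v))"
      by (rule in_var_ring_Var)
  qed
qed

section \<open>Symmetrization\<close>

definition y_symmetrize :: "nat \<Rightarrow> mpoly \<Rightarrow> mpoly" where
  "y_symmetrize d p = (\<Sum>\<sigma> | \<sigma> permutes {..<d}. act \<sigma> p)"

lemma y_symmetric_y_symmetrize: "y_symmetric d (y_symmetrize d p)"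
  unfolding y_symmetric_def
proof (intro allI impI)
  fix \<tau> assume \<tau>: "\<tau> permutes {..<d}"
  have "act \<tau> (y_symmetrize d p) = (\<Sum>\<sigma> | \<sigma> permutes {..<d}. act (\<tau> \<circ> \<sigma>) p)"
    by (simp add: y_symmetrize_def act_sum act_act)
  also have "\<dots> = y_symmetrize d p"
    unfolding y_symmetrize_def by (rule setum_permutations_compose_left[OF \<tau>, symmetric])
  finally show "act \<tau> (y_symmetrize d p) = y_symmetrize d p" .
qed

lemma in_ring_y_symmetrize: "in_ring n d p \<Longrightarrow> in_ring n d (y_symmetrize d p)"
  unfolding y_symmetrize_def in_ring_eq_in_var_ring
  by (rule in_var_ring_sum) (simp add: in_ring_act flip: in_ring_eq_in_var_ring)

lemma y_symmetrize_y_symmetric: "y_symmetric d p \<Longrightarrow> y_symmetrize d p = of_nat (fact d) * p"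
  by (simp add: y_symmetrize_def y_symmetric_def card_permutations)

lemma y_symmetrize_mult_y_symmetric:
  "y_symmetric d g \<Longrightarrow> y_symmetrize d (c * g) = y_symmetrize d c * g"
  by (simp add: y_symmetrize_def y_symmetric_def act_mult sum_distrib_right)

lemma y_symmetrize_sum: "y_symmetrize d (sum g A) = (\<Sum>a\<in>A. y_symmetrize d (g a))"
  unfolding y_symmetrize_def act_sum by (rule sum.swap)

lemma y_symmetric_Gset: "g \<in> Gset n k d \<Longrightarrow> y_symmetric d g"
  by (simp add: y_symmetric_def act_Gset)

lemma in_ideal_gen_y_symmetrize:
  assumes G: "\<And>g. g \<in> G \<Longrightarrow> y_symmetric d g"
    and f: "in_ideal_gen (in_ring n d) G f"
  shows "in_ideal_gen (\<lambda>c. in_ring n d c \<and> y_symmetric d c) G (y_symmetrize d f)"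
proof -
  obtain S c where S: "finite S" "S \<subseteq> G" and c: "\<forall>g\<in>S. in_ring n d (c g)"
    and f_eq: "f = (\<Sum>g\<in>S. c g * g)"
    using f unfolding in_ideal_gen_def by blast
  have "y_symmetrize d f = (\<Sum>g\<in>S. y_symmetrize d (c g) * g)"
    using S G by (simp add: f_eq y_symmetrize_sum y_symmetrize_mult_y_symmetric subset_iff)
  moreover have "\<forall>g\<in>S. in_ring n d (y_symmetrize d (c g)) \<and> y_symmetric d (y_symmetrize d (c g))"
    using c by (simp add: in_ring_y_symmetrize y_symmetric_y_symmetrize)
  ultimately show ?thesis
    unfolding in_ideal_gen_def using S
    by (intro exI[of _ S] exI[of _ "\<lambda>g. y_symmetrize d (c g)"]) simp
qed

theorem lemma4p10:
  fixes n k d :: nat and f :: mpoly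
  assumes "1 \<le> d" and "d \<le> k" and "k \<le> n"
    and "in_ring n d f"
    and "in_ideal_gen (in_ring n d) (Gset n k d) f"
    and "y_symmetric d f"
  shows "in_ideal_gen (\<lambda>c. in_ring n d c \<and> y_symmetric d c) (Gset n k d) (of_nat (fact d) * f)"
proof -
  have "of_nat (fact d) * f = y_symmetrize d f"
    using assms(6) by (simp add: y_symmetrize_y_symmetric)
  with in_ideal_gen_y_symmetrize[OF y_symmetric_Gset assms(5)] show ?thesis
    by simp
qed

end
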